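(* In the setting below, for all natural numbers $n,m\geq1$ with $n\neq m$, $M_n\cap M_m=\emptyset$.
   Context: Work in ZFA (ZF with a set $A$ of atoms, i.e. urelements that have no elements), extended by a primitive binary relation $\preccurlyeq$ on $A$, with Separation and Replacement holding for formulas mentioning $\preccurlyeq$. $A$ is an infinite set of atoms and $\preccurlyeq$ is a pre-ordering (reflexive, transitive) on $A$ with no minimal elements: for every $a\in A$ there is $b\in A$ with $b\preccurlyeq a$ and not $a\preccurlyeq b$. For $a\in A$, $pr(a)=\{b\in A:b\preccurlyeq a\}$; $LO(A,\preccurlyeq)$ is the set of nonempty $x\subseteq A$ with $pr(a)\subseteq x$ for all $a\in x$. For a set $X$ of sets, $LO(X,\subseteq)$ is the set of nonempty $x\subseteq X$ such that for every $y\in x$ and every $z\in X$ with $z\subseteq y$, $z\in x$. The magmatic hierarchy: $M_1=LO(A,\preccurlyeq)$ and $M_{n+1}=LO(M_n,\subseteq)$ for $n\geq1$. *)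

theory Defs
  imports Main
begin

text \<open>A ZFA universe is modelled by a type 'u of objects with a membership
relation mem (mem z y means z is an element of y) and a set A of atoms.
Atoms have no elements; non-atoms (sets) are extensional.\<close>

definition elems :: "('u \<Rightarrow> 'u \<Rightarrow> bool) \<Rightarrow> 'u \<Rightarrow> 'u set" where
  "elems mem y = {z. mem z y}"

definition zfa_universe :: "('u \<Rightarrow> 'u \<Rightarrow> bool) \<Rightarrow> 'u set \<Rightarrow> bool" where
  "zfa_universe mem A \<longleftrightarrow>
     (\<forall>a\<in>A. elems mem a = {}) \<and>
     (\<forall>x y. x \<notin> A \<longrightarrow> y \<notin> A \<longrightarrow> elems mem x = elems mem y \<longrightarrow> x = y)"

definition pr :: "'u set \<Rightarrow> ('u \<Rightarrow> 'u \<Rightarrow> bool) \<Rightarrow> 'u \<Rightarrow> 'u set" where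
  "pr A le a = {b\<in>A. le b a}"

definition LO_pre :: "'u set \<Rightarrow> ('u \<Rightarrow> 'u \<Rightarrow> bool) \<Rightarrow> 'u set set" where
  "LO_pre A le = {x. x \<noteq> {} \<and> x \<subseteq> A \<and> (\<forall>a\<in>x. pr A le a \<subseteq> x)}"

text \<open>LO(X,\<subseteq>) for a set X of sets (objects of the universe), as a collection
of subsets of X; inclusion between objects is inclusion of their elements.\<close>
definition LO_sub :: "('u \<Rightarrow> 'u \<Rightarrow> bool) \<Rightarrow> 'u set \<Rightarrow> 'u set set" where
  "LO_sub mem X = {x. x \<noteq> {} \<and> x \<subseteq> X \<and>
      (\<forall>y\<in>x. \<forall>z\<in>X. elems mem z \<subseteq> elems mem y \<longrightarrow> z \<in> x)}"

text \<open>The magmatic hierarchy, as sets of objects of the universe: an object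
belongs to M n iff it is a set (non-atom) whose set of elements lies in the
corresponding LO collection. M 0 is unused.\<close>
fun magm :: "('u \<Rightarrow> 'u \<Rightarrow> bool) \<Rightarrow> 'u set \<Rightarrow> ('u \<Rightarrow> 'u \<Rightarrow> bool) \<Rightarrow> nat \<Rightarrow> 'u set" where
  "magm mem A le 0 = {}"
| "magm mem A le (Suc 0) = {y. y \<notin> A \<and> elems mem y \<in> LO_pre A le}"
| "magm mem A le (Suc (Suc n)) =
     {y. y \<notin> A \<and> elems mem y \<in> LO_sub mem (magm mem A le (Suc n))}"

end

theory Submission
  imports Defs
begin

text \<open>An element of M_1 is a nonempty set of atoms, an element of M_(k+1) is a
nonempty set of elements of M_k, and no level contains atoms. Hence a common
element of M_1 and M_(k+2) would have an element that is both an atom and a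
non-atom, and a common element of M_(n+1) and M_(m+1) has an element in
M_n \<inter> M_m, so induction on n separates all levels.\<close>

lemma magm_Suc_inter_atoms: "magm mem A le (Suc k) \<inter> A = {}"
  by (cases k) auto

lemma elems_magm_one:
  assumes "y \<in> magm mem A le (Suc 0)"
  shows "elems mem y \<noteq> {}" and "elems mem y \<subseteq> A"
  using assms by (auto simp: LO_pre_def)

lemma elems_magm_Suc_Suc:
  assumes "y \<in> magm mem A le (Suc (Suc k))"
  shows "elems mem y \<noteq> {}" and "elems mem y \<subseteq> magm mem A le (Suc k)"
  using assms by (auto simp: LO_sub_def)

lemma magm_one_inter_Suc_Suc: "magm mem A le (Suc 0) \<inter> magm mem A le (Suc (Suc k)) = {}"
proof (rule equals0I, elim IntE)
  fix y
  assume y_one: "y \<in> magm mem A le (Suc 0)" and y_Suc_Suc: "y \<in> magm mem A le (Suc (Suc k))"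
  obtain z where "z \<in> elems mem y"
    using elems_magm_Suc_Suc(1)[OF y_Suc_Suc] by blast
  then have "z \<in> A" and "z \<in> magm mem A le (Suc k)"
    using elems_magm_one(2)[OF y_one] elems_magm_Suc_Suc(2)[OF y_Suc_Suc] by blast+
  then show False
    using magm_Suc_inter_atoms[of mem A le k] by blast
qed

lemma magm_Suc_disjoint:
  "n \<noteq> m \<Longrightarrow> magm mem A le (Suc n) \<inter> magm mem A le (Suc m) = {}"
proof (induction n arbitrary: m)
  case 0
  then obtain m' where "m = Suc m'"
    by (cases m) auto
  then show ?case
    by (simp only: magm_one_inter_Suc_Suc)
next
  case (Suc n)
  show ?case
  proof (cases m)
    case 0
    then show ?thesis
      using magm_one_inter_Suc_Suc by (simp add: Int_commute)
  next
    case (Suc m')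
    then have disjoint_below: "magm mem A le (Suc n) \<inter> magm mem A le (Suc m') = {}"
      using Suc.IH Suc.prems by simp
    show ?thesis
    proof (rule equals0I, elim IntE)
      fix y
      assume y_n: "y \<in> magm mem A le (Suc (Suc n))" and "y \<in> magm mem A le (Suc m)"
      then have y_m: "y \<in> magm mem A le (Suc (Suc m'))"
        using \<open>m = Suc m'\<close> by simp
      obtain z where "z \<in> elems mem y"
        using elems_magm_Suc_Suc(1)[OF y_n] by blast
      then have "z \<in> magm mem A le (Suc n)" and "z \<in> magm mem A le (Suc m')"
        using elems_magm_Suc_Suc(2)[OF y_n] elems_magm_Suc_Suc(2)[OF y_m] by blast+
      then show False
        using disjoint_below by blast
    qed
  qed
qed

theorem lemma4p8:
  fixes mem :: "'u \<Rightarrow> 'u \<Rightarrow> bool" and A :: "'u set" and le :: "'u \<Rightarrow> 'u \<Rightarrow> bool"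
  assumes "zfa_universe mem A"
    and "infinite A"
    and "\<forall>a\<in>A. le a a"
    and "\<forall>a\<in>A. \<forall>b\<in>A. \<forall>c\<in>A. le a b \<longrightarrow> le b c \<longrightarrow> le a c"
    and "\<forall>a\<in>A. \<exists>b\<in>A. le b a \<and> \<not> le a b"
    and "n \<ge> 1" and "m \<ge> 1" and "n \<noteq> m"
  shows "magm mem A le n \<inter> magm mem A le m = {}"
proof -
  obtain n' where "n = Suc n'"
    using \<open>n \<ge> 1\<close> by (cases n) auto
  moreover obtain m' where "m = Suc m'"
    using \<open>m \<ge> 1\<close> by (cases m) auto
  ultimately show ?thesis
    using magm_Suc_disjoint \<open>n \<noteq> m\<close> by simp
qed

end
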